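(* Let $T$ be a lush hedge of height $H$. Then for every integer $i\ge 2$, $$\ell_i(T)\ \ge\ 2\sum_{j=i+1}^{H+1}\ell_j(T).$$
   Context: A rooted tree is a finite tree with a distinguished vertex, the root. If $y,z$ are adjacent and the path from the root to $y$ passes through $z$, then $y$ is a child of $z$. In a rooted tree with at least two vertices a leaf is a non-root vertex of degree $1$; in the one-vertex tree $P_1$ the single vertex is both root and leaf. A hedge is a rooted tree which is either $P_1$ or in which all leaves have the same distance to the root. The height $\mathrm{h}(u)$ of a vertex $u$ of a hedge is its distance to a nearest leaf, and the height $H$ of the hedge is the height of its root. $V_i(T)$ denotes the set of vertices of height $i$, and for $i\ge1$, $\ell_i(T):=|V_{i-1}(T)|-|V_i(T)|$ (so $\ell_{H+1}(T)=1$ and $\ell_i(T)=0$ for $i>H+1$). A hedge is lush if every vertex of height at least $2$ has at least three children and every vertex of height $1$ has at least two children. *)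

theory Defs
  imports Main
begin

text \<open>Finite rooted trees, as rose trees (the root is the outer node; its children are
  the list entries). Vertices are addressed by positions: lists of child indices from the root.\<close>

datatype rtree = Node "rtree list"

fun children :: "rtree \<Rightarrow> rtree list" where
  "children (Node cs) = cs"

fun valid_pos :: "rtree \<Rightarrow> nat list \<Rightarrow> bool" where
  "valid_pos t [] = True"
| "valid_pos (Node cs) (i # p) = (i < length cs \<and> valid_pos (cs ! i) p)"

definition positions :: "rtree \<Rightarrow> nat list set" where
  "positions t = {p. valid_pos t p}"

fun subtree :: "rtree \<Rightarrow> nat list \<Rightarrow> rtree" where
  "subtree t [] = t"
| "subtree (Node cs) (i # p) = (if i < length cs then subtree (cs ! i) p else Node [])"

text \<open>A vertex is a leaf iff it has no children: for the one-vertex tree this is the root;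
  otherwise the root has a child, and a non-root vertex has degree 1 iff it has no children.\<close>
definition is_leaf :: "rtree \<Rightarrow> nat list \<Rightarrow> bool" where
  "is_leaf t p \<longleftrightarrow> p \<in> positions t \<and> children (subtree t p) = []"

fun lcp_len :: "nat list \<Rightarrow> nat list \<Rightarrow> nat" where
  "lcp_len (a # p) (b # q) = (if a = b then Suc (lcp_len p q) else 0)"
| "lcp_len _ _ = 0"

definition tdist :: "nat list \<Rightarrow> nat list \<Rightarrow> nat" where
  "tdist p q = length p + length q - 2 * lcp_len p q"

definition hedge :: "rtree \<Rightarrow> bool" where
  "hedge t \<longleftrightarrow> (\<forall>p q. is_leaf t p \<longrightarrow> is_leaf t q \<longrightarrow> length p = length q)"

definition vheight :: "rtree \<Rightarrow> nat list \<Rightarrow> nat" where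
  "vheight t p = Min {tdist p q | q. is_leaf t q}"

definition height :: "rtree \<Rightarrow> nat" where
  "height t = vheight t []"

definition Vset :: "rtree \<Rightarrow> nat \<Rightarrow> nat list set" where
  "Vset t i = {p \<in> positions t. vheight t p = i}"

text \<open>\<open>ell t i = |V_{i-1}(T)| - |V_i(T)|\<close>, meaningful for \<open>i \<ge> 1\<close>.\<close>
definition ell :: "rtree \<Rightarrow> nat \<Rightarrow> int" where
  "ell t i = int (card (Vset t (i - 1))) - int (card (Vset t i))"

definition lush :: "rtree \<Rightarrow> bool" where
  "lush t \<longleftrightarrow> (\<forall>p \<in> positions t.
      (vheight t p \<ge> 2 \<longrightarrow> length (children (subtree t p)) \<ge> 3) \<and>
      (vheight t p = 1 \<longrightarrow> length (children (subtree t p)) \<ge> 2))"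

end

theory Submission
  imports Defs
begin

text \<open>In a hedge of height \<open>H\<close> the height of a vertex is \<open>H\<close> minus its depth, so \<open>V\<^sub>k\<close>
  is the level at depth \<open>H - k\<close>. Since \<open>\<ell>\<^sub>j = |V\<^sub>j\<^sub>-\<^sub>1| - |V\<^sub>j|\<close>, the sum of \<open>\<ell>\<^sub>j\<close> over
  \<open>i < j \<le> H + 1\<close> telescopes to \<open>|V\<^sub>i|\<close>. For \<open>i \<ge> 2\<close> every vertex of \<open>V\<^sub>i\<close> has at least three
  children, all of them in \<open>V\<^sub>i\<^sub>-\<^sub>1\<close>, so \<open>|V\<^sub>i\<^sub>-\<^sub>1| \<ge> 3 |V\<^sub>i|\<close>, i.e. \<open>\<ell>\<^sub>i \<ge> 2 |V\<^sub>i|\<close>.\<close>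

lemma positions_Node:
  "positions (Node cs) = insert [] (\<Union>i<length cs. (#) i ` positions (cs ! i))"
proof (rule set_eqI)
  fix p
  show "p \<in> positions (Node cs) \<longleftrightarrow> p \<in> insert [] (\<Union>i<length cs. (#) i ` positions (cs ! i))"
    by (cases p) (auto simp: positions_def)
qed

lemma finite_positions: "finite (positions t)"
proof (induction t)
  case (Node cs)
  then show ?case by (auto simp: positions_Node)
qed

lemma valid_pos_append:
  "valid_pos t (p @ q) \<longleftrightarrow> valid_pos t p \<and> valid_pos (subtree t p) q"
proof (induction p arbitrary: t)
  case (Cons a p)
  then show ?case by (cases t) auto
qed simp

lemma subtree_append:
  "valid_pos t p \<Longrightarrow> subtree t (p @ q) = subtree (subtree t p) q"
proof (induction p arbitrary: t)
  case (Cons a p)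
  then show ?case by (cases t) auto
qed simp

lemma valid_pos_snoc:
  "valid_pos t (p @ [j]) \<longleftrightarrow> valid_pos t p \<and> j < length (children (subtree t p))"
  unfolding valid_pos_append by (cases "subtree t p") auto

lemma ex_childless_pos: "\<exists>q. valid_pos t q \<and> children (subtree t q) = []"
proof (induction t)
  case (Node cs)
  show ?case
  proof (cases cs)
    case Nil
    then show ?thesis by (intro exI[of _ "[]"]) auto
  next
    case (Cons c cs')
    with Node obtain q where "valid_pos c q \<and> children (subtree c q) = []" by auto
    with Cons show ?thesis by (intro exI[of _ "0 # q"]) auto
  qed
qed

lemma ex_leaf_below:
  assumes "valid_pos t p"
  shows "\<exists>q. is_leaf t (p @ q)"
proof -
  obtain q where "valid_pos (subtree t p) q" "children (subtree (subtree t p) q) = []"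
    using ex_childless_pos by blast
  with assms show ?thesis
    by (auto simp: is_leaf_def positions_def valid_pos_append subtree_append)
qed

lemma lcp_len_le_left: "lcp_len p q \<le> length p"
  by (induction p q rule: lcp_len.induct) auto

lemma lcp_len_le_right: "lcp_len p q \<le> length q"
  by (induction p q rule: lcp_len.induct) auto

lemma lcp_len_append_self: "lcp_len p (p @ r) = length p"
  by (induction p) auto

lemma vheight_eq_depth_diff:
  assumes leaf_depth: "\<And>q. is_leaf t q \<Longrightarrow> length q = D" and p: "valid_pos t p"
  shows "vheight t p = D - length p"
proof -
  let ?S = "{tdist p q | q. is_leaf t q}"
  have "?S \<subseteq> tdist p ` positions t"
    by (auto simp: is_leaf_def)
  then have "finite ?S"
    using finite_positions finite_surj by blast
  moreover obtain r where r: "is_leaf t (p @ r)"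
    using ex_leaf_below p by blast
  then have "D - length p \<in> ?S"
    using leaf_depth[OF r] by (force simp: tdist_def lcp_len_append_self)
  moreover have "D - length p \<le> tdist p q" if "is_leaf t q" for q
    using leaf_depth[OF that] lcp_len_le_left[of p q] lcp_len_le_right[of p q]
    by (simp add: tdist_def)
  ultimately show ?thesis
    unfolding vheight_def by (intro Min_eqI) blast+
qed

lemma hedge_leaf_length:
  assumes hedge: "hedge t" and q: "is_leaf t q"
  shows "length q = height t"
proof -
  have "\<And>q'. is_leaf t q' \<Longrightarrow> length q' = length q"
    using hedge q unfolding hedge_def by blast
  then have "vheight t [] = length q"
    using vheight_eq_depth_diff[of t "length q" "[]"] by simp
  then show ?thesis
    by (simp add: height_def)
qed

lemma hedge_vheight:
  "hedge t \<Longrightarrow> valid_pos t p \<Longrightarrow> vheight t p = height t - length p"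
  by (simp add: vheight_eq_depth_diff hedge_leaf_length)

lemma hedge_length_le_height:
  assumes "hedge t" and "valid_pos t p"
  shows "length p \<le> height t"
proof -
  obtain q where "is_leaf t (p @ q)"
    using ex_leaf_below assms(2) by blast
  then show ?thesis
    using hedge_leaf_length[OF assms(1)] by fastforce
qed

definition level :: "rtree \<Rightarrow> nat \<Rightarrow> nat list set" where
  "level t m = {p \<in> positions t. length p = m}"

lemma finite_level: "finite (level t m)"
  using finite_positions by (simp add: level_def)

lemma card_level_Suc:
  "card (level t (Suc m)) = (\<Sum>p\<in>level t m. length (children (subtree t p)))"
proof -
  let ?kids = "\<lambda>p. (\<lambda>j. p @ [j]) ` {..<length (children (subtree t p))}"
  have "level t (Suc m) = (\<Union>p\<in>level t m. ?kids p)"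
  proof (intro set_eqI iffI)
    fix q assume q: "q \<in> level t (Suc m)"
    then have "q \<noteq> []"
      by (auto simp: level_def)
    then have "q = butlast q @ [last q]"
      by simp
    with q show "q \<in> (\<Union>p\<in>level t m. ?kids p)"
      using valid_pos_snoc[of t "butlast q" "last q"]
      by (auto simp: level_def positions_def intro!: bexI[of _ "butlast q"])
  qed (auto simp: level_def positions_def valid_pos_snoc)
  also have "card \<dots> = (\<Sum>p\<in>level t m. card (?kids p))"
    by (rule card_UN_disjoint) (auto simp: finite_level)
  also have "\<dots> = (\<Sum>p\<in>level t m. length (children (subtree t p)))"
    by (rule sum.cong) (auto simp: card_image inj_on_def)
  finally show ?thesis .
qed

lemma hedge_Vset:
  "hedge t \<Longrightarrow> k \<le> height t \<Longrightarrow> Vset t k = level t (height t - k)"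
  using hedge_vheight hedge_length_le_height
  by (fastforce simp: Vset_def level_def positions_def)

lemma hedge_Vset_above_height:
  "hedge t \<Longrightarrow> height t < k \<Longrightarrow> Vset t k = {}"
  using hedge_vheight by (fastforce simp: Vset_def positions_def)

lemma hedge_sum_ell:
  assumes "hedge t"
  shows "(\<Sum>j = i + 1..height t + 1. ell t j) = int (card (Vset t i))"
proof (cases "i \<le> height t")
  case True
  let ?n = "\<lambda>k. int (card (Vset t k))"
  have "(\<Sum>j = Suc i..Suc (height t). ell t j) = (\<Sum>k = i..height t. ?n k - ?n (Suc k))"
    by (subst sum.shift_bounds_cl_Suc_ivl) (simp add: ell_def)
  also have "\<dots> = - (\<Sum>k = i..height t. ?n (Suc k) - ?n k)"
    by (simp add: sum_negf[symmetric])
  also have "\<dots> = ?n i - ?n (Suc (height t))"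
    using True sum_Suc_diff[of i "height t" ?n] by simp
  also have "\<dots> = ?n i"
    by (simp add: hedge_Vset_above_height[OF assms])
  finally show ?thesis
    by simp
next
  case False
  then show ?thesis
    by (cases "i = Suc (height t)")
       (auto simp: ell_def hedge_Vset_above_height[OF assms])
qed

lemma lush_card_Vset_pred:
  assumes "hedge t" and "lush t" and "2 \<le> i"
  shows "3 * card (Vset t i) \<le> card (Vset t (i - 1))"
proof (cases "i \<le> height t")
  case True
  define m where "m = height t - i"
  have "Vset t i = level t m" and "Vset t (i - 1) = level t (Suc m)"
    using hedge_Vset[OF assms(1)] True assms(3) by (auto simp: m_def Suc_diff_le)
  moreover have "3 \<le> length (children (subtree t p))" if "p \<in> level t m" for p
  proof -
    have "vheight t p = i"
      using that True hedge_vheight[OF assms(1)] by (auto simp: level_def positions_def m_def)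
    then show ?thesis
      using assms(2,3) that by (auto simp: lush_def level_def)
  qed
  then have "(\<Sum>p\<in>level t m. 3) \<le> (\<Sum>p\<in>level t m. length (children (subtree t p)))"
    by (rule sum_mono)
  ultimately show ?thesis
    by (simp add: card_level_Suc)
next
  case False
  then show ?thesis
    by (simp add: hedge_Vset_above_height[OF assms(1)])
qed

theorem mainTheorem1:
  fixes T :: rtree and H i :: nat
  assumes "hedge T" and "lush T" and "H = height T" and "2 \<le> i"
  shows "ell T i \<ge> 2 * (\<Sum>j = i + 1..H + 1. ell T j)"
proof -
  have "(\<Sum>j = i + 1..H + 1. ell T j) = int (card (Vset T i))"
    using hedge_sum_ell[OF assms(1)] assms(3) by simp
  moreover have "3 * card (Vset T i) \<le> card (Vset T (i - 1))"
    using lush_card_Vset_pred assms(1,2,4) .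
  ultimately show ?thesis
    by (simp add: ell_def)
qed

end
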